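(* In the two-door cascading memoryless semi-fractional setting, there is an optimal semi-fractional sequence $\pi$, that is, $\mathbb{E}[\pi]\le\mathbb{E}[\pi']$ for every semi-fractional sequence $\pi'$.
   Context: Two cascading memoryless doors with durations: parameters $p_1,p_2\in(0,1)$, $q_1=1-p_1$, $q_2=1-p_2$, and $c>0$. Both doors start closed. A semi-fractional sequence is an infinite alternating sequence of knocks $1^{t_1}\,2\,1^{t_2}\,2\cdots$ with real $t_j\ge0$. A 1-knock $1^t$ takes $t$ time units and, if door 1 is closed, opens it with probability $1-q_1^t$, independently of everything else. A 2-knock takes $c$ time units and opens door 2 with probability $p_2$ (independently) if door 1 is open at that time, and with probability $0$ otherwise. There is no feedback. The running time is the time at which both doors are open, and $\mathbb{E}[\pi]$ is its expectation for sequence $\pi$. *)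

theory Defs
  imports "HOL-Probability.Probability"
begin

text \<open>Semi-fractional sequence 1^{t 0} 2 1^{t 1} 2 ...  (indices from 0), with t j \<ge> 0.
  Outcome space: for each j a pair of coins.  The first coin says whether the j-th
  1-knock (duration t j) would open door 1 if it is closed (probability 1 - q1 powr t j),
  the second whether the j-th 2-knock would open door 2 if door 1 is open (probability p2).\<close>

definition knock_space :: "real \<Rightarrow> real \<Rightarrow> (nat \<Rightarrow> real) \<Rightarrow> (nat \<Rightarrow> bool \<times> bool) measure" where
  "knock_space p1 p2 t =
     PiM UNIV (\<lambda>j::nat. measure_pmf
        (pair_pmf (bernoulli_pmf (1 - (1 - p1) powr t j)) (bernoulli_pmf p2)))"

definition door1_open :: "(nat \<Rightarrow> bool \<times> bool) \<Rightarrow> nat \<Rightarrow> bool" where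
  "door1_open \<omega> j = (\<exists>i\<le>j. fst (\<omega> i))"

definition door2_opens :: "(nat \<Rightarrow> bool \<times> bool) \<Rightarrow> nat \<Rightarrow> bool" where
  "door2_opens \<omega> j = (door1_open \<omega> j \<and> snd (\<omega> j))"

definition run_time :: "(nat \<Rightarrow> real) \<Rightarrow> real \<Rightarrow> (nat \<Rightarrow> bool \<times> bool) \<Rightarrow> ennreal" where
  "run_time t c \<omega> =
     (if \<exists>j. door2_opens \<omega> j
      then (let N = (LEAST j. door2_opens \<omega> j)
            in ennreal ((\<Sum>i\<le>N. t i) + real (Suc N) * c))
      else \<infinity>)"

definition expected_time :: "real \<Rightarrow> real \<Rightarrow> real \<Rightarrow> (nat \<Rightarrow> real) \<Rightarrow> ennreal" where
  "expected_time p1 p2 c t = (\<integral>\<^sup>+ \<omega>. run_time t c \<omega> \<partial>(knock_space p1 p2 t))"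

definition semi_fractional :: "(nat \<Rightarrow> real) \<Rightarrow> bool" where
  "semi_fractional t = (\<forall>j. 0 \<le> t j)"

end

theory Submission
  imports Defs
begin

text \<open>The expected running time is the tail sum \<open>\<Sum>j. (t j + c) * F j t\<close>, where \<open>F j t\<close> is the
  probability that the first \<open>j\<close> 2-knocks all fail. Each \<open>F j\<close> is a finite sum of products of
  continuous functions of \<open>t\<close>, and \<open>F j t \<ge> (1 - p2)^j\<close>, so a sequence with expected time at most
  \<open>B\<close> satisfies \<open>t j \<le> B / (1 - p2)^j\<close>. A minimising sequence therefore lies in a product of
  compact intervals and has a pointwise convergent subsequence. Being a supremum of continuous
  partial sums, the expected time is lower semicontinuous under pointwise convergence, so the
  limit is optimal.\<close>

lemma box_eq_prod_emb_pmf: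
  "{\<omega>. \<forall>i\<in>J. \<omega> i \<in> X i} = prod_emb UNIV (\<lambda>i. measure_pmf (f i)) J (PiE J X)"
  by (auto simp: prod_emb_iff space_PiM PiE_iff)

lemma box_in_sets_PiM_pmf:
  fixes f :: "'i \<Rightarrow> 'a pmf"
  assumes "finite J"
  shows "{\<omega>. \<forall>i\<in>J. \<omega> i \<in> X i} \<in> sets (PiM UNIV (\<lambda>i. measure_pmf (f i)))"
  unfolding box_eq_prod_emb_pmf[of J X f] using assms by (intro measurable_prod_emb sets_PiM_I_finite) auto

lemma emeasure_PiM_pmf_box:
  fixes f :: "'i \<Rightarrow> 'a pmf"
  assumes "finite J"
  shows "emeasure (PiM UNIV (\<lambda>i. measure_pmf (f i))) {\<omega>. \<forall>i\<in>J. \<omega> i \<in> X i}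
           = (\<Prod>i\<in>J. emeasure (measure_pmf (f i)) (X i))"
  unfolding box_eq_prod_emb_pmf[of J X f] using assms by (intro emeasure_PiM_emb prob_space_measure_pmf) auto

lemma restrict_event_eq_UN_boxes:
  "{\<omega>. Q (restrict \<omega> J)} = (\<Union>x\<in>{x\<in>PiE J (\<lambda>_. UNIV). Q x}. {\<omega>. \<forall>i\<in>J. \<omega> i \<in> {x i}})"
proof (intro set_eqI iffI)
  fix \<omega> assume "\<omega> \<in> {\<omega>. Q (restrict \<omega> J)}"
  then show "\<omega> \<in> (\<Union>x\<in>{x\<in>PiE J (\<lambda>_. UNIV). Q x}. {\<omega>. \<forall>i\<in>J. \<omega> i \<in> {x i}})"
    by (intro UN_I[of "restrict \<omega> J"]) auto
next
  fix \<omega> assume "\<omega> \<in> (\<Union>x\<in>{x\<in>PiE J (\<lambda>_. UNIV). Q x}. {\<omega>. \<forall>i\<in>J. \<omega> i \<in> {x i}})"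
  then obtain x where "x \<in> PiE J (\<lambda>_. UNIV)" "Q x" "\<forall>i\<in>J. \<omega> i = x i" by auto
  moreover from this have "restrict \<omega> J = x" by (auto simp: PiE_def extensional_def)
  ultimately show "\<omega> \<in> {\<omega>. Q (restrict \<omega> J)}" by simp
qed

lemma restrict_event_in_sets_PiM_pmf:
  fixes f :: "'i \<Rightarrow> 'a::finite pmf"
  assumes "finite J"
  shows "{\<omega>. Q (restrict \<omega> J)} \<in> sets (PiM UNIV (\<lambda>i. measure_pmf (f i)))"
  unfolding restrict_event_eq_UN_boxes using assms
  by (intro sets.finite_UN box_in_sets_PiM_pmf finite_subset[OF _ finite_PiE]) auto

lemma emeasure_PiM_pmf_restrict_event:
  fixes f :: "'i \<Rightarrow> 'a::finite pmf"
  assumes "finite J"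
  shows "emeasure (PiM UNIV (\<lambda>i. measure_pmf (f i))) {\<omega>. Q (restrict \<omega> J)}
           = ennreal (\<Sum>x\<in>{x\<in>PiE J (\<lambda>_. UNIV). Q x}. \<Prod>i\<in>J. pmf (f i) (x i))"
proof -
  let ?C = "{x\<in>PiE J (\<lambda>_. UNIV). Q x}"
  let ?E = "\<lambda>x. {\<omega>. \<forall>i\<in>J. \<omega> i \<in> {x i}}"
  have fin: "finite ?C" using assms by (intro finite_subset[OF _ finite_PiE]) auto
  have disj: "disjoint_family_on ?E ?C"
    unfolding disjoint_family_on_def
  proof (intro ballI impI)
    fix x y assume "x \<in> ?C" "y \<in> ?C" "x \<noteq> y"
    then obtain i where "i \<in> J" "x i \<noteq> y i" by (metis (no_types, lifting) PiE_ext mem_Collect_eq)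
    then show "?E x \<inter> ?E y = {}" by auto
  qed
  have box: "?E x \<in> sets (PiM UNIV (\<lambda>i. measure_pmf (f i)))" for x
    using assms by (rule box_in_sets_PiM_pmf)
  have "emeasure (PiM UNIV (\<lambda>i. measure_pmf (f i))) (\<Union>x\<in>?C. ?E x)
      = (\<Sum>x\<in>?C. emeasure (PiM UNIV (\<lambda>i. measure_pmf (f i))) (?E x))"
    using fin disj box by (intro sum_emeasure[symmetric]) auto
  also have "\<dots> = (\<Sum>x\<in>?C. \<Prod>i\<in>J. ennreal (pmf (f i) (x i)))"
    using assms by (simp only: emeasure_PiM_pmf_box emeasure_pmf_single)
  also have "\<dots> = ennreal (\<Sum>x\<in>?C. \<Prod>i\<in>J. pmf (f i) (x i))"
    by (simp add: prod_ennreal sum_ennreal prod_nonneg)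
  finally show ?thesis unfolding restrict_event_eq_UN_boxes .
qed

lemma emeasure_pair_pmf_UNIV_Times:
  "emeasure (measure_pmf (pair_pmf A B)) (UNIV \<times> Y) = emeasure (measure_pmf B) Y"
proof -
  have "emeasure (measure_pmf (pair_pmf A B)) (snd -` Y)
      = emeasure (measure_pmf (map_pmf snd (pair_pmf A B))) Y"
    by (rule emeasure_map_pmf[symmetric])
  moreover have "UNIV \<times> Y = snd -` Y" by auto
  ultimately show ?thesis by (metis map_snd_pair_pmf)
qed

lemma bounded_seq_has_pointwise_convergent_subseq:
  fixes T :: "nat \<Rightarrow> 'i::countable \<Rightarrow> real"
  assumes "\<And>n i. T n i \<in> {a i..b i}"
  obtains r l where "strict_mono r" "\<And>i. (\<lambda>n. T (r n) i) \<longlonglongrightarrow> l i" "\<And>i. l i \<in> {a i..b i}"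
proof -
  define Box :: "('i \<Rightarrow> real) set" where "Box = PiE UNIV (\<lambda>i. {a i..b i})"
  have "compactin (product_topology (\<lambda>_. euclidean) UNIV) Box"
    unfolding Box_def compactin_PiE by (simp add: compactin_euclidean_iff)
  then have "compact Box" by (simp add: euclidean_product_topology compactin_euclidean_iff)
  moreover have "T n \<in> Box" for n using assms by (simp add: Box_def PiE_UNIV_domain)
  ultimately obtain l r where l: "l \<in> Box" "strict_mono r" "(T \<circ> r) \<longlonglongrightarrow> l"
    using compact_imp_seq_compact unfolding seq_compact_def by metis
  have "(\<lambda>n. T (r n) i) \<longlonglongrightarrow> l i" for i
  proof -
    have "continuous_on UNIV (\<lambda>x::'i \<Rightarrow> real. x i)" by simp
    from continuous_on_tendsto_compose[OF this l(3)] show ?thesis by (simp add: o_def)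
  qed
  moreover have "l i \<in> {a i..b i}" for i using l(1) by (auto simp: Box_def)
  ultimately show ?thesis using l(2) that by blast
qed

lemma ennreal_INF_minimizing_seq:
  fixes f :: "'a \<Rightarrow> ennreal"
  assumes "(INF x\<in>A. f x) \<noteq> \<top>"
  obtains X where "\<And>n. X n \<in> A" "(\<lambda>n. f (X n)) \<longlonglongrightarrow> (INF x\<in>A. f x)"
    "\<And>n. f (X n) \<le> (INF x\<in>A. f x) + 1"
proof -
  let ?m = "INF x\<in>A. f x"
  let ?\<epsilon> = "\<lambda>n. ennreal (inverse (real (Suc n)))"
  have "?m < ?m + ?\<epsilon> n" for n
    using assms by (cases ?m) (auto simp flip: ennreal_plus simp: ennreal_less_iff)
  then have "\<forall>n. \<exists>x\<in>A. f x < ?m + ?\<epsilon> n" by (auto simp: INF_less_iff)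
  then obtain X where X: "\<And>n. X n \<in> A" "\<And>n. f (X n) < ?m + ?\<epsilon> n" by metis
  have "(\<lambda>n. f (X n)) \<longlonglongrightarrow> ?m"
  proof (rule tendsto_sandwich)
    show "\<forall>\<^sub>F n in sequentially. ?m \<le> f (X n)" using X(1) by (simp add: INF_lower)
    show "\<forall>\<^sub>F n in sequentially. f (X n) \<le> ?m + ?\<epsilon> n" using X(2) by (simp add: less_imp_le)
    have "(\<lambda>n. ?m + ?\<epsilon> n) \<longlonglongrightarrow> ?m + ennreal 0"
      by (intro tendsto_add tendsto_const tendsto_ennrealI LIMSEQ_inverse_real_of_nat)
    then show "(\<lambda>n. ?m + ?\<epsilon> n) \<longlonglongrightarrow> ?m" by simp
  qed (rule tendsto_const)
  moreover have "f (X n) \<le> ?m + 1" for n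
    using X(2)[of n] by (rule order.trans[OF less_imp_le add_left_mono]) (simp add: inverse_le_1_iff)
  ultimately show ?thesis using X(1) that by blast
qed

definition knock_weight :: "real \<Rightarrow> real \<Rightarrow> real \<Rightarrow> bool \<times> bool \<Rightarrow> real" where
  "knock_weight p1 p2 s x =
     (if fst x then 1 - (1 - p1) powr s else (1 - p1) powr s) * (if snd x then p2 else 1 - p2)"

definition failure_prob :: "real \<Rightarrow> real \<Rightarrow> (nat \<Rightarrow> real) \<Rightarrow> nat \<Rightarrow> real" where
  "failure_prob p1 p2 t j =
     (\<Sum>x\<in>{x\<in>PiE {..<j} (\<lambda>_. UNIV). \<forall>k<j. \<not> door2_opens x k}. \<Prod>i<j. knock_weight p1 p2 (t i) (x i))"

lemma door2_opens_restrict: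
  assumes "k < j" shows "door2_opens (restrict \<omega> {..<j}) k = door2_opens \<omega> k"
proof -
  have "restrict \<omega> {..<j} i = \<omega> i" if "i \<le> k" for i using that assms by simp
  then show ?thesis unfolding door2_opens_def door1_open_def by (metis order.refl)
qed

lemma failure_event_eq_restrict_event:
  "{\<omega>. \<forall>k<j. \<not> door2_opens \<omega> k} = {\<omega>. (\<lambda>x. \<forall>k<j. \<not> door2_opens x k) (restrict \<omega> {..<j})}"
  by (simp add: door2_opens_restrict)

lemma failure_event_in_sets: "{\<omega>. \<forall>k<j. \<not> door2_opens \<omega> k} \<in> sets (knock_space p1 p2 t)"
  unfolding knock_space_def failure_event_eq_restrict_event
  by (intro restrict_event_in_sets_PiM_pmf) simp

text \<open>Round \<open>j\<close> (the knocks \<open>1^{t j} 2\<close>, lasting \<open>t j + c\<close>) is played exactly when the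
  first \<open>j\<close> 2-knocks have failed.\<close>

lemma run_time_eq_suminf:
  assumes "semi_fractional t" "0 < c"
  shows "run_time t c \<omega> = (\<Sum>j. ennreal (t j + c) * indicator {\<omega>. \<forall>k<j. \<not> door2_opens \<omega> k} \<omega>)"
proof (cases "\<exists>j. door2_opens \<omega> j")
  case True
  define N where "N = (LEAST j. door2_opens \<omega> j)"
  have "door2_opens \<omega> N" unfolding N_def using True by (rule LeastI_ex)
  moreover have "\<not> door2_opens \<omega> k" if "k < N" for k
    using that unfolding N_def by (rule not_less_Least)
  ultimately have ind: "indicator {\<omega>. \<forall>k<j. \<not> door2_opens \<omega> k} \<omega> = (if j \<le> N then 1 else (0::ennreal))"
    for j by (auto simp: indicator_def not_le)
  have "(\<Sum>j. ennreal (t j + c) * indicator {\<omega>. \<forall>k<j. \<not> door2_opens \<omega> k} \<omega>)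
      = (\<Sum>j\<le>N. ennreal (t j + c))"
    by (subst suminf_finite[of "{..N}"]) (simp_all add: ind)
  also have "\<dots> = ennreal (\<Sum>j\<le>N. t j + c)"
    using assms by (intro sum_ennreal) (simp add: semi_fractional_def add_nonneg_nonneg less_imp_le)
  also have "(\<Sum>j\<le>N. t j + c) = (\<Sum>i\<le>N. t i) + real (Suc N) * c"
    by (simp add: sum.distrib)
  finally show ?thesis using True unfolding run_time_def N_def[symmetric] by simp
next
  case False
  have "\<not> summable (\<lambda>j. t j + c)"
  proof
    assume "summable (\<lambda>j. t j + c)"
    then have "(\<lambda>j. t j + c) \<longlonglongrightarrow> 0" by (rule summable_LIMSEQ_zero)
    moreover have "\<forall>n. c \<le> t n + c" using assms(1) by (simp add: semi_fractional_def)
    ultimately have "c \<le> 0" by (intro LIMSEQ_le_const) auto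
    with assms(2) show False by simp
  qed
  then have "(\<Sum>j. ennreal (t j + c)) = \<top>"
    using assms by (intro summable_iff_suminf_neq_top)
      (simp_all add: semi_fractional_def add_nonneg_nonneg less_imp_le)
  with False show ?thesis by (simp add: run_time_def)
qed

context
  fixes p1 p2 :: real
  assumes p1: "0 \<le> p1" "p1 < 1" and p2: "0 \<le> p2" "p2 \<le> 1"
begin

lemma pmf_knock:
  assumes "0 \<le> s"
  shows "pmf (pair_pmf (bernoulli_pmf (1 - (1 - p1) powr s)) (bernoulli_pmf p2)) x = knock_weight p1 p2 s x"
proof -
  have "(1 - p1) powr s \<le> 1" using p1 assms by (intro powr_le1) auto
  then show ?thesis using p2 by (cases x) (auto simp: pmf_pair knock_weight_def)
qed

lemma knock_weight_nonneg: "0 \<le> s \<Longrightarrow> 0 \<le> knock_weight p1 p2 s x"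
  using pmf_knock by (metis pmf_nonneg)

lemma failure_prob_nonneg: "semi_fractional t \<Longrightarrow> 0 \<le> failure_prob p1 p2 t j"
  unfolding failure_prob_def semi_fractional_def
  by (intro sum_nonneg prod_nonneg knock_weight_nonneg) auto

lemma emeasure_failure_event:
  assumes "semi_fractional t"
  shows "emeasure (knock_space p1 p2 t) {\<omega>. \<forall>k<j. \<not> door2_opens \<omega> k} = ennreal (failure_prob p1 p2 t j)"
proof -
  have "emeasure (knock_space p1 p2 t) {\<omega>. \<forall>k<j. \<not> door2_opens \<omega> k}
      = ennreal (\<Sum>x\<in>{x\<in>PiE {..<j} (\<lambda>_. UNIV). \<forall>k<j. \<not> door2_opens x k}.
          \<Prod>i<j. pmf (pair_pmf (bernoulli_pmf (1 - (1 - p1) powr t i)) (bernoulli_pmf p2)) (x i))"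
    unfolding knock_space_def failure_event_eq_restrict_event
    by (rule emeasure_PiM_pmf_restrict_event) simp
  also have "\<dots> = ennreal (failure_prob p1 p2 t j)"
    using assms by (simp add: failure_prob_def pmf_knock semi_fractional_def)
  finally show ?thesis .
qed

text \<open>Already the event that the door-2 coins of the first \<open>j\<close> rounds all fail has probability
  \<open>(1 - p2)^j\<close>.\<close>

lemma power_le_failure_prob:
  assumes "semi_fractional t"
  shows "(1 - p2) ^ j \<le> failure_prob p1 p2 t j"
proof -
  let ?B = "{\<omega>. \<forall>i\<in>{..<j}. \<omega> i \<in> UNIV \<times> {False}}"
  have "ennreal ((1 - p2) ^ j) = emeasure (knock_space p1 p2 t) ?B"
    using p2 by (simp add: knock_space_def emeasure_PiM_pmf_box emeasure_pair_pmf_UNIV_Times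
        emeasure_pmf_single ennreal_power)
  also have "\<dots> \<le> emeasure (knock_space p1 p2 t) {\<omega>. \<forall>k<j. \<not> door2_opens \<omega> k}"
    by (rule emeasure_mono[OF _ failure_event_in_sets]) (fastforce simp: door2_opens_def mem_Times_iff)
  finally show ?thesis
    using assms failure_prob_nonneg by (simp add: emeasure_failure_event)
qed

lemma failure_prob_tendsto:
  assumes "\<And>i. (\<lambda>n. T n i) \<longlonglongrightarrow> t i"
  shows "(\<lambda>n. failure_prob p1 p2 (T n) j) \<longlonglongrightarrow> failure_prob p1 p2 t j"
proof -
  have "(\<lambda>n. (1 - p1) powr T n i) \<longlonglongrightarrow> (1 - p1) powr t i" for i
    using p1 by (intro tendsto_powr tendsto_const assms) auto
  then have "(\<lambda>n. knock_weight p1 p2 (T n i) x) \<longlonglongrightarrow> knock_weight p1 p2 (t i) x" for i x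
    unfolding knock_weight_def
    by (intro tendsto_mult tendsto_const) (cases "fst x"; simp add: tendsto_diff)
  then show ?thesis unfolding failure_prob_def by (intro tendsto_sum tendsto_prod)
qed

lemma expected_time_eq_suminf:
  assumes "semi_fractional t" "0 < c"
  shows "expected_time p1 p2 c t = (\<Sum>j. ennreal ((t j + c) * failure_prob p1 p2 t j))"
proof -
  let ?F = "\<lambda>j. {\<omega>. \<forall>k<j. \<not> door2_opens \<omega> k}"
  have "run_time t c = (\<lambda>\<omega>. \<Sum>j. ennreal (t j + c) * indicator (?F j) \<omega>)"
    using run_time_eq_suminf[OF assms] by (rule ext)
  then have "expected_time p1 p2 c t = (\<integral>\<^sup>+ \<omega>. (\<Sum>j. ennreal (t j + c) * indicator (?F j) \<omega>) \<partial>knock_space p1 p2 t)"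
    by (simp only: expected_time_def)
  also have "\<dots> = (\<Sum>j. \<integral>\<^sup>+ \<omega>. ennreal (t j + c) * indicator (?F j) \<omega> \<partial>knock_space p1 p2 t)"
    using failure_event_in_sets[of _ p1 p2 t] by (intro nn_integral_suminf) simp
  also have "\<dots> = (\<Sum>j. ennreal (t j + c) * ennreal (failure_prob p1 p2 t j))"
    using failure_event_in_sets[of _ p1 p2 t] emeasure_failure_event[OF assms(1)]
    by (simp add: nn_integral_cmult_indicator)
  also have "\<dots> = (\<Sum>j. ennreal ((t j + c) * failure_prob p1 p2 t j))"
    using assms by (simp add: ennreal_mult' semi_fractional_def add_nonneg_nonneg less_imp_le)
  finally show ?thesis .
qed

lemma knock_le_of_expected_time_le:
  assumes "semi_fractional t" "0 < c" "p2 < 1" "0 \<le> B" "expected_time p1 p2 c t \<le> ennreal B"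
  shows "t j \<le> B / (1 - p2) ^ j"
proof -
  have "ennreal (t j * (1 - p2) ^ j) \<le> ennreal ((t j + c) * failure_prob p1 p2 t j)"
    using assms power_le_failure_prob[OF assms(1), of j]
    by (intro ennreal_leI mult_mono) (auto simp: semi_fractional_def)
  also have "\<dots> \<le> expected_time p1 p2 c t"
    unfolding expected_time_eq_suminf[OF assms(1,2)]
    using sum_le_suminf[of "\<lambda>j. ennreal ((t j + c) * failure_prob p1 p2 t j)" "{j}"] by simp
  also have "\<dots> \<le> ennreal B" by (rule assms(5))
  finally show ?thesis
    using assms(3,4) by (simp add: pos_le_divide_eq)
qed

lemma expected_time_lower_semicontinuous:
  assumes "\<And>n. semi_fractional (T n)" "semi_fractional t" "0 < c"
    and "\<And>i. (\<lambda>n. T n i) \<longlonglongrightarrow> t i" and "(\<lambda>n. expected_time p1 p2 c (T n)) \<longlonglongrightarrow> e"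
  shows "expected_time p1 p2 c t \<le> e"
  unfolding expected_time_eq_suminf[OF assms(2,3)] suminf_eq_SUP
proof (rule SUP_least)
  fix K
  show "(\<Sum>j<K. ennreal ((t j + c) * failure_prob p1 p2 t j)) \<le> e"
  proof (rule LIMSEQ_le)
    show "(\<lambda>n. \<Sum>j<K. ennreal ((T n j + c) * failure_prob p1 p2 (T n) j))
        \<longlonglongrightarrow> (\<Sum>j<K. ennreal ((t j + c) * failure_prob p1 p2 t j))"
      by (intro tendsto_intros failure_prob_tendsto assms(4))
    show "\<exists>N. \<forall>n\<ge>N. (\<Sum>j<K. ennreal ((T n j + c) * failure_prob p1 p2 (T n) j))
        \<le> expected_time p1 p2 c (T n)"
      by (simp add: expected_time_eq_suminf[OF assms(1,3)] sum_le_suminf)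
  qed (rule assms(5))
qed

lemma obtain_expected_time_le_limit:
  assumes "p2 < 1" "0 < c" "\<And>n. semi_fractional (T n)"
    and "\<And>n. expected_time p1 p2 c (T n) \<le> b" "b \<noteq> \<top>"
    and "(\<lambda>n. expected_time p1 p2 c (T n)) \<longlonglongrightarrow> e"
  obtains l where "semi_fractional l" "expected_time p1 p2 c l \<le> e"
proof -
  define B where "B = enn2real b"
  have B: "0 \<le> B" "b = ennreal B" using assms(5) by (simp_all add: B_def ennreal_enn2real_if)
  have "T n j \<in> {0..B / (1 - p2) ^ j}" for n j
    using assms(1-4) B knock_le_of_expected_time_le[of "T n" c B j] by (simp add: semi_fractional_def)
  then obtain r l where l: "strict_mono r" "\<And>j. (\<lambda>n. T (r n) j) \<longlonglongrightarrow> l j"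
      "\<And>j. l j \<in> {0..B / (1 - p2) ^ j}"
    using bounded_seq_has_pointwise_convergent_subseq[of T "\<lambda>_. 0" "\<lambda>j. B / (1 - p2) ^ j"]
    by blast
  have "semi_fractional l" using l(3) by (simp add: semi_fractional_def)
  moreover have "(\<lambda>n. expected_time p1 p2 c (T (r n))) \<longlonglongrightarrow> e"
    using LIMSEQ_subseq_LIMSEQ[OF assms(6) l(1)] by (simp add: o_def)
  ultimately have "expected_time p1 p2 c l \<le> e"
    using assms(2,3) l(2) by (intro expected_time_lower_semicontinuous[of "\<lambda>n. T (r n)"])
  with \<open>semi_fractional l\<close> show ?thesis by (rule that)
qed

end

theorem mainTheorem16:
  fixes p1 p2 c :: real
  assumes "0 < p1" "p1 < 1" "0 < p2" "p2 < 1" "0 < c"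
  shows "\<exists>t. semi_fractional t \<and>
           (\<forall>t'. semi_fractional t' \<longrightarrow> expected_time p1 p2 c t \<le> expected_time p1 p2 c t')"
proof -
  let ?E = "expected_time p1 p2 c"
  have p: "0 \<le> p1" "0 \<le> p2" "p2 \<le> 1" using assms by auto
  define m where "m = (INF t\<in>{t. semi_fractional t}. ?E t)"
  have m_le: "m \<le> ?E t" if "semi_fractional t" for t
    unfolding m_def using that by (simp add: INF_lower)
  show ?thesis
  proof (cases "m = \<top>")
    case True
    have "semi_fractional (\<lambda>_. 0)" by (simp add: semi_fractional_def)
    with True m_le show ?thesis by (metis top_greatest top_unique)
  next
    case False
    obtain T where "\<And>n. semi_fractional (T n)" "(\<lambda>n. ?E (T n)) \<longlonglongrightarrow> m" "\<And>n. ?E (T n) \<le> m + 1"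
      using False unfolding m_def by (rule ennreal_INF_minimizing_seq) auto
    moreover have "m + 1 \<noteq> \<top>" using False by simp
    ultimately obtain l where "semi_fractional l" "?E l \<le> m"
      using obtain_expected_time_le_limit[OF p(1) assms(2) p(2,3) assms(4,5)] by metis
    with m_le show ?thesis by (blast intro: order_trans)
  qed
qed

end
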